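(* Let $\mathcal{A}$ be a fuzzy automaton and $\Phi=(\varphi_n)_{n\in\mathbb{N}}$ the greatest depth-bounded fuzzy bisimulation between $\mathcal{A}$ and itself. If $\mathcal{L}$ satisfies the join-meet distributivity law, $\otimes$ is continuous and $\mathcal{A}$ is image-finite, then (a) $\bigwedge_n\varphi_n$ is the greatest fuzzy bisimulation between $\mathcal{A}$ and itself; (b) each $\varphi_n$ is a fuzzy equivalence on $A$; (c) $\|\Phi\|^b_{\mathcal{A},\mathcal{A}}=1$.
   Context: $\mathcal{L}=\langle L,\le,\otimes,\Rightarrow,0,1\rangle$ is a complete residuated lattice: $\langle L,\le,0,1\rangle$ is a complete lattice with least element $0$ and greatest element $1$, $\langle L,\otimes,1\rangle$ is a commutative monoid, and $x\otimes y\le z$ iff $x\le (y\Rightarrow z)$. Join-meet distributivity law: $a\vee\bigwedge B=\bigwedge_{b\in B}(a\vee b)$. $\otimes$ continuous: $x\otimes\bigwedge Y=\bigwedge_{y\in Y}(x\otimes y)$. Fuzzy relations are maps into $L$ ordered pointwise; $\varphi^{-1}(b,a)=\varphi(a,b)$; $(\varphi\circ\psi)(a,c)=\bigvee_b\varphi(a,b)\otimes\psi(b,c)$, $(f\circ\varphi)(b)=\bigvee_a f(a)\otimes\varphi(a,b)$, $(\varphi\circ g)(a)=\bigvee_b\varphi(a,b)\otimes g(b)$; $S(g,f)=\bigwedge_a(g(a)\Rightarrow f(a))$. A fuzzy relation $\varphi$ on $A$ is a fuzzy equivalence if $\varphi(a,a)=1$ for all $a$, $\varphi=\varphi^{-1}$,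 and $\varphi\circ\varphi\le\varphi$. A fuzzy automaton over $\Sigma$ is $\mathcal{A}=\langle A,\delta^{\mathcal{A}},\sigma^{\mathcal{A}},\tau^{\mathcal{A}}\rangle$ with $A$ nonempty, $\delta^{\mathcal{A}}:A\times\Sigma\times A\to L$, $\sigma^{\mathcal{A}},\tau^{\mathcal{A}}:A\to L$; $\delta^{\mathcal{A}}_s(x,y)=\delta^{\mathcal{A}}(x,s,y)$. Image-finite: each $\{y\mid\delta^{\mathcal{A}}_s(x,y)>0\}$ finite and $\sigma^{\mathcal{A}}$ has finite support. $\|\varphi\|_{\mathcal{A},\mathcal{A}}=S(\sigma^{\mathcal{A}},\sigma^{\mathcal{A}}\circ\varphi^{-1})$. A fuzzy bisimulation between $\mathcal{A}$ and $\mathcal{A}'$: $\varphi$ with $\varphi^{-1}\circ\tau^{\mathcal{A}}\le\tau^{\mathcal{A}'}$, $\varphi\circ\tau^{\mathcal{A}'}\le\tau^{\mathcal{A}}$, $\varphi^{-1}\circ\delta^{\mathcal{A}}_s\le\delta^{\mathcal{A}'}_s\circ\varphi^{-1}$, $\varphi\circ\delta^{\mathcal{A}'}_s\le\delta^{\mathcal{A}}_s\circ\varphi$ ($s\in\Sigma$). A depth-bounded fuzzy bisimulation is a sequence $(\varphi_n)_{n\in\mathbb{N}}$ with $\varphi_n\le\varphi_{n-1}$ ($n\ge1$), $\varphi_0^{-1}\circ\tau^{\mathcal{A}}\le\tau^{\mathcal{A}'}$, $\varphi_0\circ\tau^{\mathcal{A}'}\le\tau^{\mathcal{A}}$, and $\varphi_n^{-1}\circ\delta^{\mathcal{A}}_s\le\delta^{\mathcal{A}'}_s\circ\varphi_{n-1}^{-1}$,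 $\varphi_n\circ\delta^{\mathcal{A}'}_s\le\delta^{\mathcal{A}}_s\circ\varphi_{n-1}$ ($s\in\Sigma,n\ge1$); its norm is $\|\Phi\|^b=\bigwedge_n\|\varphi_n\|\wedge\bigwedge_n\|\varphi_n^{-1}\|$. Sequences are ordered componentwise. *)

theory Defs
  imports Main
begin

text \<open>Complete residuated lattice on a complete lattice type 'l: 0 = bot, 1 = top,
  tensor t (the monoid operation), residuum r.\<close>

definition complete_residuated_lattice ::
  "('l::complete_lattice \<Rightarrow> 'l \<Rightarrow> 'l) \<Rightarrow> ('l \<Rightarrow> 'l \<Rightarrow> 'l) \<Rightarrow> bool" where
  "complete_residuated_lattice t r \<longleftrightarrow>
     (\<forall>x y z. t (t x y) z = t x (t y z)) \<and>
     (\<forall>x y. t x y = t y x) \<and>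
     (\<forall>x. t x top = x) \<and>
     (\<forall>x y z. t x y \<le> z \<longleftrightarrow> x \<le> r y z)"

definition join_meet_distributive :: "'l::complete_lattice itself \<Rightarrow> bool" where
  "join_meet_distributive _ \<longleftrightarrow> (\<forall>(a::'l) B. sup a (Inf B) = (INF b\<in>B. sup a b))"

text \<open>Continuity of the tensor (for nonempty Y; for Y empty the law would force
  every element to be top).\<close>
definition tensor_continuous :: "('l::complete_lattice \<Rightarrow> 'l \<Rightarrow> 'l) \<Rightarrow> bool" where
  "tensor_continuous t \<longleftrightarrow> (\<forall>x Y. Y \<noteq> {} \<longrightarrow> t x (Inf Y) = (INF y\<in>Y. t x y))"

definition fconv :: "('a \<Rightarrow> 'b \<Rightarrow> 'l) \<Rightarrow> 'b \<Rightarrow> 'a \<Rightarrow> 'l" where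
  "fconv \<phi> = (\<lambda>b a. \<phi> a b)"

definition frel_comp ::
  "('l::complete_lattice \<Rightarrow> 'l \<Rightarrow> 'l) \<Rightarrow> ('a \<Rightarrow> 'b \<Rightarrow> 'l) \<Rightarrow> ('b \<Rightarrow> 'c \<Rightarrow> 'l) \<Rightarrow> 'a \<Rightarrow> 'c \<Rightarrow> 'l" where
  "frel_comp t \<phi> \<psi> = (\<lambda>a c. SUP b. t (\<phi> a b) (\<psi> b c))"

definition fset_rel_comp ::
  "('l::complete_lattice \<Rightarrow> 'l \<Rightarrow> 'l) \<Rightarrow> ('a \<Rightarrow> 'l) \<Rightarrow> ('a \<Rightarrow> 'b \<Rightarrow> 'l) \<Rightarrow> 'b \<Rightarrow> 'l" where
  "fset_rel_comp t f \<phi> = (\<lambda>b. SUP a. t (f a) (\<phi> a b))"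

definition frel_set_comp ::
  "('l::complete_lattice \<Rightarrow> 'l \<Rightarrow> 'l) \<Rightarrow> ('a \<Rightarrow> 'b \<Rightarrow> 'l) \<Rightarrow> ('b \<Rightarrow> 'l) \<Rightarrow> 'a \<Rightarrow> 'l" where
  "frel_set_comp t \<phi> g = (\<lambda>a. SUP b. t (\<phi> a b) (g b))"

definition subsethood ::
  "('l::complete_lattice \<Rightarrow> 'l \<Rightarrow> 'l) \<Rightarrow> ('a \<Rightarrow> 'l) \<Rightarrow> ('a \<Rightarrow> 'l) \<Rightarrow> 'l" where
  "subsethood r g f = (INF a. r (g a) (f a))"

definition fuzzy_equivalence ::
  "('l::complete_lattice \<Rightarrow> 'l \<Rightarrow> 'l) \<Rightarrow> ('a \<Rightarrow> 'a \<Rightarrow> 'l) \<Rightarrow> bool" where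
  "fuzzy_equivalence t \<phi> \<longleftrightarrow>
     (\<forall>a. \<phi> a a = top) \<and> \<phi> = fconv \<phi> \<and> frel_comp t \<phi> \<phi> \<le> \<phi>"

text \<open>Fuzzy automata: states of type 'a (nonempty by HOL typing), alphabet = UNIV of type 's;
  an automaton is given by its transition function delta, initial sigma, final tau.\<close>

definition image_finite ::
  "('a \<Rightarrow> 's \<Rightarrow> 'a \<Rightarrow> 'l::complete_lattice) \<Rightarrow> ('a \<Rightarrow> 'l) \<Rightarrow> bool" where
  "image_finite \<delta> \<sigma> \<longleftrightarrow>
     (\<forall>x s. finite {y. bot < \<delta> x s y}) \<and> finite {x. bot < \<sigma> x}"

definition fnorm ::
  "('l::complete_lattice \<Rightarrow> 'l \<Rightarrow> 'l) \<Rightarrow> ('l \<Rightarrow> 'l \<Rightarrow> 'l) \<Rightarrow> ('a \<Rightarrow> 'l) \<Rightarrow> ('b \<Rightarrow> 'l)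
     \<Rightarrow> ('a \<Rightarrow> 'b \<Rightarrow> 'l) \<Rightarrow> 'l" where
  "fnorm t r \<sigma> \<sigma>' \<phi> = subsethood r \<sigma> (fset_rel_comp t \<sigma>' (fconv \<phi>))"

definition fuzzy_bisimulation ::
  "('l::complete_lattice \<Rightarrow> 'l \<Rightarrow> 'l)
   \<Rightarrow> ('a \<Rightarrow> 's \<Rightarrow> 'a \<Rightarrow> 'l) \<Rightarrow> ('a \<Rightarrow> 'l)
   \<Rightarrow> ('b \<Rightarrow> 's \<Rightarrow> 'b \<Rightarrow> 'l) \<Rightarrow> ('b \<Rightarrow> 'l)
   \<Rightarrow> ('a \<Rightarrow> 'b \<Rightarrow> 'l) \<Rightarrow> bool" where
  "fuzzy_bisimulation t \<delta> \<tau> \<delta>' \<tau>' \<phi> \<longleftrightarrow>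
     frel_set_comp t (fconv \<phi>) \<tau> \<le> \<tau>' \<and>
     frel_set_comp t \<phi> \<tau>' \<le> \<tau> \<and>
     (\<forall>s. frel_comp t (fconv \<phi>) (\<lambda>x y. \<delta> x s y) \<le> frel_comp t (\<lambda>x y. \<delta>' x s y) (fconv \<phi>)) \<and>
     (\<forall>s. frel_comp t \<phi> (\<lambda>x y. \<delta>' x s y) \<le> frel_comp t (\<lambda>x y. \<delta> x s y) \<phi>)"

definition depth_bounded_fuzzy_bisimulation ::
  "('l::complete_lattice \<Rightarrow> 'l \<Rightarrow> 'l)
   \<Rightarrow> ('a \<Rightarrow> 's \<Rightarrow> 'a \<Rightarrow> 'l) \<Rightarrow> ('a \<Rightarrow> 'l)
   \<Rightarrow> ('b \<Rightarrow> 's \<Rightarrow> 'b \<Rightarrow> 'l) \<Rightarrow> ('b \<Rightarrow> 'l)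
   \<Rightarrow> (nat \<Rightarrow> 'a \<Rightarrow> 'b \<Rightarrow> 'l) \<Rightarrow> bool" where
  "depth_bounded_fuzzy_bisimulation t \<delta> \<tau> \<delta>' \<tau>' \<Phi> \<longleftrightarrow>
     (\<forall>n\<ge>1. \<Phi> n \<le> \<Phi> (n - 1)) \<and>
     frel_set_comp t (fconv (\<Phi> 0)) \<tau> \<le> \<tau>' \<and>
     frel_set_comp t (\<Phi> 0) \<tau>' \<le> \<tau> \<and>
     (\<forall>s. \<forall>n\<ge>1. frel_comp t (fconv (\<Phi> n)) (\<lambda>x y. \<delta> x s y)
                  \<le> frel_comp t (\<lambda>x y. \<delta>' x s y) (fconv (\<Phi> (n - 1)))) \<and>
     (\<forall>s. \<forall>n\<ge>1. frel_comp t (\<Phi> n) (\<lambda>x y. \<delta>' x s y)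
                  \<le> frel_comp t (\<lambda>x y. \<delta> x s y) (\<Phi> (n - 1)))"

definition depth_bounded_norm ::
  "('l::complete_lattice \<Rightarrow> 'l \<Rightarrow> 'l) \<Rightarrow> ('l \<Rightarrow> 'l \<Rightarrow> 'l) \<Rightarrow> ('a \<Rightarrow> 'l) \<Rightarrow> ('b \<Rightarrow> 'l)
     \<Rightarrow> (nat \<Rightarrow> 'a \<Rightarrow> 'b \<Rightarrow> 'l) \<Rightarrow> 'l" where
  "depth_bounded_norm t r \<sigma> \<sigma>' \<Phi> =
     inf (INF n. fnorm t r \<sigma> \<sigma>' (\<Phi> n)) (INF n. fnorm t r \<sigma>' \<sigma> (fconv (\<Phi> n)))"

end

theory Submission
  imports Defs
begin

(* The conditions defining a depth-bounded fuzzy bisimulation are preserved by the constant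
  identity sequence, by converses and by levelwise composition, so the greatest one consists of
  fuzzy equivalences; reflexivity alone already forces its norm to be 1.  The meet of the chain
  is a fuzzy bisimulation because, by image-finiteness, only finitely many successors d contribute
  to the supremum over d of delta(a, d) * phi_n(d, c); for a finite family of decreasing chains
  join-meet distributivity lets the meet over n pass inside that finite join, and continuity of
  the tensor lets it pass inside the product. *)

lemma INF_sup_le_sup_INF:
  fixes h g :: "nat \<Rightarrow> 'l::complete_lattice"
  assumes jmd: "join_meet_distributive TYPE('l)" and "antimono h" and "antimono g"
  shows "(INF n. sup (h n) (g n)) \<le> sup (INF n. h n) (INF n. g n)"
proof -
  have sup_INF: "sup a (INF i. f i) = (INF i. sup a (f i))" for a :: 'l and f :: "nat \<Rightarrow> 'l"
    using jmd unfolding join_meet_distributive_def by (simp add: image_image)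
  have "(INF k. sup (h k) (g k)) \<le> sup (g m) (h n)" for n m
  proof -
    have "(INF k. sup (h k) (g k)) \<le> sup (h (max n m)) (g (max n m))" by (rule INF_lower) simp
    also have "\<dots> \<le> sup (g m) (h n)"
      using assms(2,3) by (simp add: antimonoD le_supI1 le_supI2)
    finally show ?thesis .
  qed
  then have "(INF k. sup (h k) (g k)) \<le> (INF m. sup (g m) (INF n. h n))"
    by (simp add: sup_INF le_INF_iff)
  also have "\<dots> = (INF m. sup (INF n. h n) (g m))"
    by (simp add: sup_commute)
  also have "\<dots> = sup (INF n. h n) (INF m. g m)"
    by (rule sup_INF[symmetric])
  finally show ?thesis .
qed

lemma INF_SUP_le_SUP_INF:
  fixes f :: "'x \<Rightarrow> nat \<Rightarrow> 'l::complete_lattice"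
  assumes jmd: "join_meet_distributive TYPE('l)" and "finite D" and dec: "\<And>d. antimono (f d)"
  shows "(INF n. SUP d\<in>D. f d n) \<le> (SUP d\<in>D. INF n. f d n)"
  using \<open>finite D\<close>
proof (induction D rule: finite_induct)
  case (insert x F)
  have "antimono (\<lambda>n. SUP d\<in>F. f d n)"
    using dec by (auto intro!: antimonoI SUP_mono' dest: antimonoD)
  then have "(INF n. SUP d\<in>insert x F. f d n) \<le> sup (INF n. f x n) (INF n. SUP d\<in>F. f d n)"
    using INF_sup_le_sup_INF[OF jmd dec] by simp
  also have "\<dots> \<le> sup (INF n. f x n) (SUP d\<in>F. INF n. f d n)"
    using insert.IH by (rule sup_mono[OF order_refl])
  finally show ?case by simp
qed simp

definition frel_Id :: "'a \<Rightarrow> 'a \<Rightarrow> 'l::complete_lattice" where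
  "frel_Id a b = (if a = b then top else bot)"

lemma fconv_frel_Id [simp]: "fconv frel_Id = frel_Id"
  unfolding fconv_def frel_Id_def by (intro ext) auto

lemma fconv_fconv [simp]: "fconv (fconv \<phi>) = \<phi>"
  unfolding fconv_def by simp

lemma fconv_mono: "\<phi> \<le> \<psi> \<Longrightarrow> fconv \<phi> \<le> fconv \<psi>"
  unfolding fconv_def le_fun_def by simp

lemma fconv_INF: "fconv (INF n. \<Phi> n) = (INF n. fconv (\<Phi> n))"
  unfolding fconv_def by (simp add: fun_eq_iff image_image)

lemma SUP_if_eq: "(SUP b. if a = b then x else (bot::'l::complete_lattice)) = x"
  by (rule antisym) (auto intro!: SUP_least intro: SUP_upper2[where i=a])

locale residuated_lattice =
  fixes t :: "'l::complete_lattice \<Rightarrow> 'l \<Rightarrow> 'l" and r :: "'l \<Rightarrow> 'l \<Rightarrow> 'l"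
  assumes complete_residuated: "complete_residuated_lattice t r"
begin

lemma tensor_assoc: "t (t x y) z = t x (t y z)"
  using complete_residuated unfolding complete_residuated_lattice_def by blast

lemma tensor_commute: "t x y = t y x"
  using complete_residuated unfolding complete_residuated_lattice_def by blast

lemma tensor_top_right [simp]: "t x top = x"
  using complete_residuated unfolding complete_residuated_lattice_def by blast

lemma tensor_top_left [simp]: "t top x = x"
  by (simp add: tensor_commute[of top])

lemma residuation: "t x y \<le> z \<longleftrightarrow> x \<le> r y z"
  using complete_residuated unfolding complete_residuated_lattice_def by blast

lemma tensor_mono_left: "x \<le> x' \<Longrightarrow> t x y \<le> t x' y"
  using residuation order_trans by blast

lemma tensor_mono: "x \<le> x' \<Longrightarrow> y \<le> y' \<Longrightarrow> t x y \<le> t x' y'"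
  by (metis tensor_commute tensor_mono_left order_trans)

lemma tensor_SUP_left: "t (SUP i\<in>I. f i) y = (SUP i\<in>I. t (f i) y)"
proof (rule antisym)
  have "(SUP i\<in>I. f i) \<le> r y (SUP i\<in>I. t (f i) y)"
    by (rule SUP_least) (auto simp flip: residuation intro: SUP_upper)
  then show "t (SUP i\<in>I. f i) y \<le> (SUP i\<in>I. t (f i) y)" by (simp add: residuation)
  show "(SUP i\<in>I. t (f i) y) \<le> t (SUP i\<in>I. f i) y"
    by (rule SUP_least) (rule tensor_mono_left, rule SUP_upper)
qed

lemma tensor_SUP_right: "t x (SUP i\<in>I. f i) = (SUP i\<in>I. t x (f i))"
  by (simp only: tensor_commute[of x] tensor_SUP_left)

lemma tensor_bot_left [simp]: "t bot y = bot"
  by (simp add: residuation bot_unique flip: bot_unique)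

lemma tensor_bot_right [simp]: "t y bot = bot"
  by (simp add: tensor_commute[of y])

lemma frel_comp_assoc: "frel_comp t (frel_comp t \<phi> \<psi>) \<chi> = frel_comp t \<phi> (frel_comp t \<psi> \<chi>)"
proof (intro ext)
  fix a c
  have "frel_comp t (frel_comp t \<phi> \<psi>) \<chi> a c = (SUP b. SUP d. t (t (\<phi> a d) (\<psi> d b)) (\<chi> b c))"
    unfolding frel_comp_def by (simp add: tensor_SUP_left)
  also have "\<dots> = (SUP d. SUP b. t (t (\<phi> a d) (\<psi> d b)) (\<chi> b c))" by (rule SUP_commute)
  also have "\<dots> = frel_comp t \<phi> (frel_comp t \<psi> \<chi>) a c"
    unfolding frel_comp_def by (simp add: tensor_SUP_right tensor_assoc)
  finally show "frel_comp t (frel_comp t \<phi> \<psi>) \<chi> a c = frel_comp t \<phi> (frel_comp t \<psi> \<chi>) a c" .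
qed

lemma frel_set_comp_assoc:
  "frel_set_comp t (frel_comp t \<phi> \<psi>) g = frel_set_comp t \<phi> (frel_set_comp t \<psi> g)"
proof (intro ext)
  fix a
  have "frel_set_comp t (frel_comp t \<phi> \<psi>) g a = (SUP b. SUP d. t (t (\<phi> a d) (\<psi> d b)) (g b))"
    unfolding frel_comp_def frel_set_comp_def by (simp add: tensor_SUP_left)
  also have "\<dots> = (SUP d. SUP b. t (t (\<phi> a d) (\<psi> d b)) (g b))" by (rule SUP_commute)
  also have "\<dots> = frel_set_comp t \<phi> (frel_set_comp t \<psi> g) a"
    unfolding frel_set_comp_def by (simp add: tensor_SUP_right tensor_assoc)
  finally show "frel_set_comp t (frel_comp t \<phi> \<psi>) g a = frel_set_comp t \<phi> (frel_set_comp t \<psi> g) a" .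
qed

lemma fconv_frel_comp: "fconv (frel_comp t \<phi> \<psi>) = frel_comp t (fconv \<psi>) (fconv \<phi>)"
  unfolding fconv_def frel_comp_def by (simp add: tensor_commute)

lemma frel_comp_mono: "\<phi> \<le> \<phi>' \<Longrightarrow> \<psi> \<le> \<psi>' \<Longrightarrow> frel_comp t \<phi> \<psi> \<le> frel_comp t \<phi>' \<psi>'"
  unfolding frel_comp_def le_fun_def by (auto intro!: SUP_mono' tensor_mono)

lemma frel_set_comp_mono: "\<phi> \<le> \<phi>' \<Longrightarrow> g \<le> g' \<Longrightarrow> frel_set_comp t \<phi> g \<le> frel_set_comp t \<phi>' g'"
  unfolding frel_set_comp_def le_fun_def by (auto intro!: SUP_mono' tensor_mono)

lemma frel_comp_Id_left [simp]: "frel_comp t frel_Id \<phi> = \<phi>"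
  unfolding frel_comp_def frel_Id_def
  by (intro ext) (simp add: if_distrib[of "\<lambda>x. t x y" for y] SUP_if_eq cong: if_cong)

lemma frel_comp_Id_right [simp]: "frel_comp t \<phi> frel_Id = \<phi>"
  unfolding frel_comp_def frel_Id_def
  by (intro ext) (simp add: if_distrib[of "\<lambda>y. t x y" for x] eq_commute[of _ b for b] SUP_if_eq
      cong: if_cong)

lemma frel_set_comp_Id_left [simp]: "frel_set_comp t frel_Id g = g"
  unfolding frel_set_comp_def frel_Id_def
  by (intro ext) (simp add: if_distrib[of "\<lambda>x. t x y" for y] SUP_if_eq cong: if_cong)

lemma frel_comp_simulation_trans:
  assumes "frel_comp t \<phi> \<delta>\<^sub>2 \<le> frel_comp t \<delta>\<^sub>1 \<phi>'"
    and "frel_comp t \<psi> \<delta>\<^sub>3 \<le> frel_comp t \<delta>\<^sub>2 \<psi>'"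
  shows "frel_comp t (frel_comp t \<phi> \<psi>) \<delta>\<^sub>3 \<le> frel_comp t \<delta>\<^sub>1 (frel_comp t \<phi>' \<psi>')"
proof -
  have "frel_comp t (frel_comp t \<phi> \<psi>) \<delta>\<^sub>3 = frel_comp t \<phi> (frel_comp t \<psi> \<delta>\<^sub>3)"
    by (rule frel_comp_assoc)
  also have "\<dots> \<le> frel_comp t \<phi> (frel_comp t \<delta>\<^sub>2 \<psi>')"
    using assms(2) by (rule frel_comp_mono[OF order_refl])
  also have "\<dots> = frel_comp t (frel_comp t \<phi> \<delta>\<^sub>2) \<psi>'"
    by (rule frel_comp_assoc[symmetric])
  also have "\<dots> \<le> frel_comp t (frel_comp t \<delta>\<^sub>1 \<phi>') \<psi>'"
    using assms(1) by (rule frel_comp_mono[OF _ order_refl])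
  also have "\<dots> = frel_comp t \<delta>\<^sub>1 (frel_comp t \<phi>' \<psi>')"
    by (rule frel_comp_assoc)
  finally show ?thesis .
qed

lemma frel_set_comp_simulation_trans:
  assumes "frel_set_comp t \<phi> g\<^sub>2 \<le> g\<^sub>1" and "frel_set_comp t \<psi> g\<^sub>3 \<le> g\<^sub>2"
  shows "frel_set_comp t (frel_comp t \<phi> \<psi>) g\<^sub>3 \<le> g\<^sub>1"
  using frel_set_comp_mono[OF order_refl assms(2), of \<phi>] assms(1)
  by (simp add: frel_set_comp_assoc)

end

lemma depth_bounded_fuzzy_bisimulation_Suc_iff:
  "depth_bounded_fuzzy_bisimulation t \<delta> \<tau> \<delta>' \<tau>' \<Phi> \<longleftrightarrow>
     antimono \<Phi> \<and>
     frel_set_comp t (fconv (\<Phi> 0)) \<tau> \<le> \<tau>' \<and>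
     frel_set_comp t (\<Phi> 0) \<tau>' \<le> \<tau> \<and>
     (\<forall>s n. frel_comp t (fconv (\<Phi> (Suc n))) (\<lambda>x y. \<delta> x s y)
              \<le> frel_comp t (\<lambda>x y. \<delta>' x s y) (fconv (\<Phi> n))) \<and>
     (\<forall>s n. frel_comp t (\<Phi> (Suc n)) (\<lambda>x y. \<delta>' x s y)
              \<le> frel_comp t (\<lambda>x y. \<delta> x s y) (\<Phi> n))"
proof -
  have pred: "(\<forall>n\<ge>(1::nat). P n (n - 1)) \<longleftrightarrow> (\<forall>n. P (Suc n) n)" for P
    by (metis One_nat_def Suc_le_eq diff_Suc_1 gr0_implies_Suc le_add1 plus_1_eq_Suc)
  show ?thesis
    unfolding depth_bounded_fuzzy_bisimulation_def antimono_iff_le_Suc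
    by (simp only: pred[where P = "\<lambda>n m. \<Phi> n \<le> \<Phi> m"]
        pred[where P = "\<lambda>n m. frel_comp t (fconv (\<Phi> n)) _ \<le> frel_comp t _ (fconv (\<Phi> m))"]
        pred[where P = "\<lambda>n m. frel_comp t (\<Phi> n) _ \<le> frel_comp t _ (\<Phi> m)"])
qed

lemma depth_bounded_fuzzy_bisimulation_const:
  "fuzzy_bisimulation t \<delta> \<tau> \<delta>' \<tau>' \<psi> \<Longrightarrow> depth_bounded_fuzzy_bisimulation t \<delta> \<tau> \<delta>' \<tau>' (\<lambda>n. \<psi>)"
  unfolding depth_bounded_fuzzy_bisimulation_def fuzzy_bisimulation_def by simp

lemma depth_bounded_fuzzy_bisimulation_fconv:
  "depth_bounded_fuzzy_bisimulation t \<delta> \<tau> \<delta>' \<tau>' \<Phi> \<Longrightarrow>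
   depth_bounded_fuzzy_bisimulation t \<delta>' \<tau>' \<delta> \<tau> (\<lambda>n. fconv (\<Phi> n))"
  unfolding depth_bounded_fuzzy_bisimulation_def by (auto intro: fconv_mono)

context residuated_lattice
begin

lemma depth_bounded_fuzzy_bisimulation_Id:
  "depth_bounded_fuzzy_bisimulation t \<delta> \<tau> \<delta> \<tau> (\<lambda>n. frel_Id)"
  unfolding depth_bounded_fuzzy_bisimulation_def by simp

lemma depth_bounded_fuzzy_bisimulation_comp:
  assumes "depth_bounded_fuzzy_bisimulation t \<delta>\<^sub>1 \<tau>\<^sub>1 \<delta>\<^sub>2 \<tau>\<^sub>2 \<Phi>"
    and "depth_bounded_fuzzy_bisimulation t \<delta>\<^sub>2 \<tau>\<^sub>2 \<delta>\<^sub>3 \<tau>\<^sub>3 \<Psi>"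
  shows "depth_bounded_fuzzy_bisimulation t \<delta>\<^sub>1 \<tau>\<^sub>1 \<delta>\<^sub>3 \<tau>\<^sub>3 (\<lambda>n. frel_comp t (\<Phi> n) (\<Psi> n))"
proof -
  note \<Phi> = assms(1)[unfolded depth_bounded_fuzzy_bisimulation_Suc_iff]
  note \<Psi> = assms(2)[unfolded depth_bounded_fuzzy_bisimulation_Suc_iff]
  show ?thesis
    unfolding depth_bounded_fuzzy_bisimulation_Suc_iff fconv_frel_comp
  proof (intro conjI allI)
    show "antimono (\<lambda>n. frel_comp t (\<Phi> n) (\<Psi> n))"
      using \<Phi> \<Psi> by (auto simp: antimono_def intro: frel_comp_mono)
    show "frel_set_comp t (frel_comp t (fconv (\<Psi> 0)) (fconv (\<Phi> 0))) \<tau>\<^sub>1 \<le> \<tau>\<^sub>3"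
      using \<Phi> \<Psi> by (intro frel_set_comp_simulation_trans[where g\<^sub>2 = \<tau>\<^sub>2]) auto
    show "frel_set_comp t (frel_comp t (\<Phi> 0) (\<Psi> 0)) \<tau>\<^sub>3 \<le> \<tau>\<^sub>1"
      using \<Phi> \<Psi> by (intro frel_set_comp_simulation_trans[where g\<^sub>2 = \<tau>\<^sub>2]) auto
  next
    fix s n
    show "frel_comp t (frel_comp t (fconv (\<Psi> (Suc n))) (fconv (\<Phi> (Suc n)))) (\<lambda>x y. \<delta>\<^sub>1 x s y)
      \<le> frel_comp t (\<lambda>x y. \<delta>\<^sub>3 x s y) (frel_comp t (fconv (\<Psi> n)) (fconv (\<Phi> n)))"
      using \<Phi> \<Psi>
      by (intro frel_comp_simulation_trans[where \<delta>\<^sub>2 = "\<lambda>x y. \<delta>\<^sub>2 x s y"]) auto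
    show "frel_comp t (frel_comp t (\<Phi> (Suc n)) (\<Psi> (Suc n))) (\<lambda>x y. \<delta>\<^sub>3 x s y)
      \<le> frel_comp t (\<lambda>x y. \<delta>\<^sub>1 x s y) (frel_comp t (\<Phi> n) (\<Psi> n))"
      using \<Phi> \<Psi>
      by (intro frel_comp_simulation_trans[where \<delta>\<^sub>2 = "\<lambda>x y. \<delta>\<^sub>2 x s y"]) auto
  qed
qed

lemma greatest_depth_bounded_fuzzy_bisimulation_equivalence:
  assumes "depth_bounded_fuzzy_bisimulation t \<delta> \<tau> \<delta> \<tau> \<Phi>"
    and greatest: "\<forall>\<Psi>. depth_bounded_fuzzy_bisimulation t \<delta> \<tau> \<delta> \<tau> \<Psi> \<longrightarrow> \<Psi> \<le> \<Phi>"
  shows "fuzzy_equivalence t (\<Phi> n)"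
proof -
  have Id: "frel_Id \<le> \<Phi> n"
    using greatest depth_bounded_fuzzy_bisimulation_Id by (blast dest: le_funD)
  have conv: "fconv (\<Phi> m) \<le> \<Phi> m" for m
    using greatest depth_bounded_fuzzy_bisimulation_fconv[OF assms(1)] by (blast dest: le_funD)
  have "\<Phi> n = fconv (\<Phi> n)"
    using conv[of n] fconv_mono[OF conv[of n]] by simp
  moreover have "frel_comp t (\<Phi> n) (\<Phi> n) \<le> \<Phi> n"
    using greatest depth_bounded_fuzzy_bisimulation_comp[OF assms(1) assms(1)]
    by (blast dest: le_funD)
  moreover have "\<Phi> n a a = top" for a
    using le_funD[OF le_funD[OF Id, of a], of a] by (simp add: frel_Id_def top_unique)
  ultimately show ?thesis unfolding fuzzy_equivalence_def by blast
qed

lemma fnorm_eq_top_if_refl: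
  assumes "\<And>a. \<phi> a a = top"
  shows "fnorm t r \<sigma> \<sigma> \<phi> = top"
  unfolding fnorm_def subsethood_def fset_rel_comp_def fconv_def
proof (rule INF_eq_const[OF UNIV_not_empty])
  fix a
  have "t top (\<sigma> a) \<le> (SUP b. t (\<sigma> b) (\<phi> a b))"
    using SUP_upper[of a UNIV "\<lambda>b. t (\<sigma> b) (\<phi> a b)"] by (simp add: assms)
  then have "top \<le> r (\<sigma> a) (SUP b. t (\<sigma> b) (\<phi> a b))"
    by (simp only: residuation)
  then show "r (\<sigma> a) (SUP b. t (\<sigma> b) (\<phi> a b)) = top"
    by (simp add: top_unique)
qed

lemma depth_bounded_norm_eq_top_if_refl:
  assumes "\<And>n a. \<Phi> n a a = top"
  shows "depth_bounded_norm t r \<sigma> \<sigma> \<Phi> = top"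
  unfolding depth_bounded_norm_def
  by (simp add: fnorm_eq_top_if_refl assms fconv_def)

end

locale distributive_residuated_lattice =
  residuated_lattice t r for t :: "'l::complete_lattice \<Rightarrow> 'l \<Rightarrow> 'l" and r +
  assumes join_meet_distributive: "join_meet_distributive TYPE('l)"
    and continuous: "tensor_continuous t"
begin

lemma tensor_INF_right: "t x (INF m. f m) = (INF m. t x (f m))"
  using continuous unfolding tensor_continuous_def by (simp add: image_image)

lemma le_SUP_tensor_INF:
  fixes w :: "'d \<Rightarrow> 'l" and g :: "nat \<Rightarrow> 'd \<Rightarrow> 'l"
  assumes fin: "finite {d. bot < w d}"
    and le_SUP: "\<And>m. X \<le> (SUP d. t (w d) (g m d))"
    and dec: "\<And>d. antimono (\<lambda>m. g m d)"
  shows "X \<le> (SUP d. t (w d) (INF m. g m d))"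
proof -
  let ?D = "{d. bot < w d}"
  have restrict: "(SUP d. t (w d) (f d)) = (SUP d\<in>?D. t (w d) (f d))" for f :: "'d \<Rightarrow> 'l"
  proof (rule antisym)
    show "(SUP d. t (w d) (f d)) \<le> (SUP d\<in>?D. t (w d) (f d))"
    proof (rule SUP_least)
      fix d
      show "t (w d) (f d) \<le> (SUP d\<in>?D. t (w d) (f d))"
      proof (cases "d \<in> ?D")
        case False
        then have "w d = bot" using bot.not_eq_extremum by blast
        then show ?thesis by simp
      qed (rule SUP_upper)
    qed
  qed (rule SUP_subset_mono, auto)
  have "X \<le> (INF m. SUP d\<in>?D. t (w d) (g m d))"
  proof (rule INF_greatest)
    fix m show "X \<le> (SUP d\<in>?D. t (w d) (g m d))"
      using le_SUP[of m] by (simp only: restrict)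
  qed
  also have "\<dots> \<le> (SUP d\<in>?D. INF m. t (w d) (g m d))"
  proof (rule INF_SUP_le_SUP_INF[where f = "\<lambda>d m. t (w d) (g m d)", OF join_meet_distributive fin])
    fix d show "antimono (\<lambda>m. t (w d) (g m d))"
      by (rule antimonoI) (rule tensor_mono[OF order_refl antimonoD[OF dec]])
  qed
  also have "\<dots> = (SUP d\<in>?D. t (w d) (INF m. g m d))"
    by (simp only: tensor_INF_right)
  also have "\<dots> = (SUP d. t (w d) (INF m. g m d))"
    by (rule restrict[symmetric])
  finally show ?thesis .
qed

lemma frel_comp_INF_simulation:
  fixes \<Phi> :: "nat \<Rightarrow> 'a \<Rightarrow> 'b \<Rightarrow> 'l"
  assumes fin: "\<And>a. finite {d. bot < \<delta>' a d}" and dec: "antimono \<Phi>"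
    and sim: "\<And>n. frel_comp t (\<Phi> (Suc n)) \<delta> \<le> frel_comp t \<delta>' (\<Phi> n)"
  shows "frel_comp t (INF n. \<Phi> n) \<delta> \<le> frel_comp t \<delta>' (INF n. \<Phi> n)"
proof (intro le_funI)
  fix a c
  have "t (INF n. \<Phi> n a b) (\<delta> b c) \<le> (SUP d. t (\<delta>' a d) (INF m. \<Phi> m d c))" for b
  proof (rule le_SUP_tensor_INF[OF fin])
    fix m
    have "t (INF n. \<Phi> n a b) (\<delta> b c) \<le> t (\<Phi> (Suc m) a b) (\<delta> b c)"
      by (intro tensor_mono_left INF_lower) simp
    also have "\<dots> \<le> frel_comp t (\<Phi> (Suc m)) \<delta> a c"
      unfolding frel_comp_def by (rule SUP_upper) simp
    also have "\<dots> \<le> frel_comp t \<delta>' (\<Phi> m) a c"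
      using sim by (simp add: le_fun_def)
    finally show "t (INF n. \<Phi> n a b) (\<delta> b c) \<le> (SUP d. t (\<delta>' a d) (\<Phi> m d c))"
      unfolding frel_comp_def .
  next
    fix d show "antimono (\<lambda>m. \<Phi> m d c)"
      by (rule antimonoI) (rule le_funD[OF le_funD[OF antimonoD[OF dec]]])
  qed
  then show "frel_comp t (INF n. \<Phi> n) \<delta> a c \<le> frel_comp t \<delta>' (INF n. \<Phi> n) a c"
    unfolding frel_comp_def INF_apply by (rule SUP_least)
qed

lemma fuzzy_bisimulation_INF:
  assumes fin: "\<And>a s. finite {d. bot < \<delta> a s d}" and fin': "\<And>a s. finite {d. bot < \<delta>' a s d}"
    and "depth_bounded_fuzzy_bisimulation t \<delta> \<tau> \<delta>' \<tau>' \<Phi>"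
  shows "fuzzy_bisimulation t \<delta> \<tau> \<delta>' \<tau>' (INF n. \<Phi> n)"
proof -
  note DB = assms(3)[unfolded depth_bounded_fuzzy_bisimulation_Suc_iff]
  have low: "(INF n. \<Phi> n) \<le> \<Phi> 0" by (rule INF_lower) simp
  show ?thesis
    unfolding fuzzy_bisimulation_def
  proof (intro conjI allI)
    show "frel_set_comp t (fconv (INF n. \<Phi> n)) \<tau> \<le> \<tau>'"
      using order_trans[OF frel_set_comp_mono[OF fconv_mono[OF low] order_refl]] DB by blast
    show "frel_set_comp t (INF n. \<Phi> n) \<tau>' \<le> \<tau>"
      using order_trans[OF frel_set_comp_mono[OF low order_refl]] DB by blast
  next
    fix s
    have "antimono (\<lambda>n. fconv (\<Phi> n))"
      using DB by (auto simp: antimono_iff_le_Suc intro: fconv_mono)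
    then show "frel_comp t (fconv (INF n. \<Phi> n)) (\<lambda>x y. \<delta> x s y)
      \<le> frel_comp t (\<lambda>x y. \<delta>' x s y) (fconv (INF n. \<Phi> n))"
      unfolding fconv_INF using fin' DB by (intro frel_comp_INF_simulation) auto
    show "frel_comp t (INF n. \<Phi> n) (\<lambda>x y. \<delta>' x s y) \<le> frel_comp t (\<lambda>x y. \<delta> x s y) (INF n. \<Phi> n)"
      using fin DB by (intro frel_comp_INF_simulation) auto
  qed
qed

end

theorem mainTheorem13:
  fixes t r :: "'l::complete_lattice \<Rightarrow> 'l \<Rightarrow> 'l"
    and \<delta> :: "'a \<Rightarrow> 's \<Rightarrow> 'a \<Rightarrow> 'l" and \<sigma> \<tau> :: "'a \<Rightarrow> 'l"
    and \<Phi> :: "nat \<Rightarrow> 'a \<Rightarrow> 'a \<Rightarrow> 'l"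
  assumes "complete_residuated_lattice t r"
    and "join_meet_distributive TYPE('l)"
    and "tensor_continuous t"
    and "image_finite \<delta> \<sigma>"
    and "depth_bounded_fuzzy_bisimulation t \<delta> \<tau> \<delta> \<tau> \<Phi>"
    and "\<forall>\<Psi>. depth_bounded_fuzzy_bisimulation t \<delta> \<tau> \<delta> \<tau> \<Psi> \<longrightarrow> \<Psi> \<le> \<Phi>"
  shows "fuzzy_bisimulation t \<delta> \<tau> \<delta> \<tau> (INF n. \<Phi> n)
       \<and> (\<forall>\<psi>. fuzzy_bisimulation t \<delta> \<tau> \<delta> \<tau> \<psi> \<longrightarrow> \<psi> \<le> (INF n. \<Phi> n))
       \<and> (\<forall>n. fuzzy_equivalence t (\<Phi> n))
       \<and> depth_bounded_norm t r \<sigma> \<sigma> \<Phi> = top"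
proof -
  interpret distributive_residuated_lattice t r
    using assms(1-3) by unfold_locales
  have fin: "\<And>a s. finite {d. bot < \<delta> a s d}"
    using assms(4) unfolding image_finite_def by blast
  have equiv: "fuzzy_equivalence t (\<Phi> n)" for n
    using greatest_depth_bounded_fuzzy_bisimulation_equivalence[OF assms(5,6)] .
  have greatest: "\<psi> \<le> (INF n. \<Phi> n)" if "fuzzy_bisimulation t \<delta> \<tau> \<delta> \<tau> \<psi>" for \<psi>
    using assms(6) depth_bounded_fuzzy_bisimulation_const[OF that]
    by (blast intro: INF_greatest dest: le_funD)
  have "depth_bounded_norm t r \<sigma> \<sigma> \<Phi> = top"
    using equiv by (intro depth_bounded_norm_eq_top_if_refl) (simp add: fuzzy_equivalence_def)
  with fuzzy_bisimulation_INF[OF fin fin assms(5)] greatest equiv show ?thesis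
    by blast
qed

end
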